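(* Let $q>1$, $\alpha>0$, $0<\theta<1$, $1\le r<\infty$, and let $K_d$ be a nonnegative decreasing function on $(0,1)$. Then, with constants depending only on $q,\alpha,\theta,r$, $$\int_0^1\Bigl[t^{1-\theta}(1-\log t)^{\frac{\alpha(1-\theta)}{q}}\sup_{t<s<1}(1-\log s)^{-\frac{\alpha}{q}}K_d(s)\Bigr]^r\frac{dt}{t}\ \approx\ \int_0^1\Bigl[t^{1-\theta}(1-\log t)^{-\frac{\alpha\theta}{q}}K_d(t)\Bigr]^r\frac{dt}{t}.$$
   Context: $\log$ is the natural logarithm. $A\approx B$ means $c^{-1}B\le A\le cB$ with $c$ independent of $K_d$. *)

theory Defs
  imports "HOL-Analysis.Analysis"
begin

end

theory Submission
  imports Defs
begin

text \<open>Write w(t) = 1 - ln t, a = \<alpha>/q and S(t) = sup {w(s)^(-a) K(s) | t < s < 1}.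
  The kernel integral is bounded by the supremum integral pointwise after the substitution
  t = 2x: since 2x lies in (x,1) and w(2x) \<le> w(x), one has w(2x)^(-a\<theta>) K(2x) \<le> w(x)^(a(1-\<theta>)) S(x).
  Conversely, w varies by at most a factor 2 on (s/e, s] and K decreases, so averaging over this
  interval against du/u gives S(t)^r \<le> C \<integral>(t/e..1) (w^(-a) K)^r du/u.  After Tonelli it remains to
  show \<integral>(0..eu) t^(b-1) w(t)^p dt \<le> C u^b w(u)^p, where b = (1-\<theta>)r and p = a(1-\<theta>)r; this follows
  from w(t)^p \<le> C w(u)^p (eu/t)^(b/2) for t < eu.\<close>

lemma one_plus_ln_powr_le:
  fixes x g p :: real
  assumes "x \<ge> 1" "g > 0" "p > 0"
  shows "(1 + ln x) powr p \<le> (1 + p/g) powr p * x powr g"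
proof -
  have x0: "x > 0" using assms by simp
  have y1: "x powr (g/p) \<ge> 1" using assms by (simp add: ge_one_powr_ge_zero)
  have "(g/p) * ln x = ln (x powr (g/p))" using x0 by (simp add: ln_powr)
  also have "\<dots> \<le> x powr (g/p) - 1" using x0 by (intro ln_le_minus_one) simp
  also have "\<dots> \<le> x powr (g/p)" by simp
  finally have "ln x \<le> (p/g) * x powr (g/p)" using assms by (simp add: field_simps)
  hence "1 + ln x \<le> (1 + p/g) * x powr (g/p)" using y1 by (simp add: algebra_simps)
  hence "(1 + ln x) powr p \<le> ((1 + p/g) * x powr (g/p)) powr p"
    using assms by (intro powr_mono2) auto
  also have "\<dots> = (1 + p/g) powr p * x powr g"
    using assms x0 by (simp add: powr_mult powr_powr)
  finally show ?thesis .
qed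

lemma powr_SUP_le:
  fixes g :: "'a \<Rightarrow> real" and r :: real and \<Phi> :: ennreal
  assumes "S \<noteq> {}" "r > 0" "\<And>s. s \<in> S \<Longrightarrow> 0 \<le> g s"
    and "\<And>s. s \<in> S \<Longrightarrow> ennreal (g s powr r) \<le> \<Phi>"
  shows "ennreal ((SUP s\<in>S. g s) powr r) \<le> \<Phi>"
proof (cases \<Phi>)
  case (real x)
  have g_le: "g s \<le> x powr (1/r)" if s: "s \<in> S" for s
  proof -
    have "g s powr r \<le> x" using assms(4)[OF s] real assms(2) by (auto simp: ennreal_le_iff2)
    hence "(g s powr r) powr (1/r) \<le> x powr (1/r)" using assms(2) by (intro powr_mono2) auto
    thus ?thesis using assms(2) assms(3)[OF s] by (simp add: powr_powr)
  qed
  obtain s where s: "s \<in> S" using assms(1) by blast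
  have "bdd_above (g ` S)" using g_le by (rule bdd_aboveI2)
  then have "g s \<le> (SUP s\<in>S. g s)" by (rule cSUP_upper[OF s])
  then have "0 \<le> (SUP s\<in>S. g s)" using assms(3)[OF s] by linarith
  moreover have "(SUP s\<in>S. g s) \<le> x powr (1/r)" using assms(1) g_le by (rule cSUP_least)
  ultimately have "(SUP s\<in>S. g s) powr r \<le> (x powr (1/r)) powr r"
    using assms(2) by (intro powr_mono2) auto
  also have "\<dots> = x" using real assms(2) by (simp add: powr_powr)
  finally show ?thesis using real by (simp add: ennreal_leI)
qed simp

lemma one_minus_ln_powr_le:
  fixes b p u t :: real
  assumes "b > 0" "p > 0" "0 < u" "u < 1" "0 < t" "t < exp 1 * u"
  shows "(1 - ln t) powr p \<le> (1 + 2*p/b) powr p * (1 - ln u) powr p * (exp 1 * u / t) powr (b/2)"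
proof -
  define x where "x = exp 1 * u / t"
  have x1: "x \<ge> 1" using assms by (simp add: x_def)
  have lnu: "1 - ln u \<ge> 1" using assms by simp
  have "ln x = 1 + ln u - ln t" using assms by (simp add: x_def ln_div ln_mult)
  moreover have "ln x \<le> (1 - ln u) * ln x" using mult_right_mono[OF lnu, of "ln x"] x1 by simp
  ultimately have "1 - ln t \<le> (1 - ln u) * (1 + ln x)" by (simp add: algebra_simps)
  moreover have "ln t \<le> 1"
    using assms x1 \<open>ln x = 1 + ln u - ln t\<close> ln_less_zero[of u] ln_ge_zero[OF x1] by linarith
  ultimately have "(1 - ln t) powr p \<le> ((1 - ln u) * (1 + ln x)) powr p"
    using assms by (intro powr_mono2) auto
  also have "\<dots> = (1 - ln u) powr p * (1 + ln x) powr p"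
    using lnu x1 by (simp add: powr_mult)
  also have "\<dots> \<le> (1 - ln u) powr p * ((1 + p/(b/2)) powr p * x powr (b/2))"
    using one_plus_ln_powr_le[OF x1, of "b/2" p] assms by (intro mult_left_mono) auto
  finally show ?thesis by (simp add: x_def mult_ac)
qed

lemma nn_integral_powr_ln_weight_le:
  fixes b p u :: real
  assumes "b > 0" "p > 0" "0 < u" "u < 1"
  shows "(\<integral>\<^sup>+t. (if 0 < t \<and> t < 1 \<and> t < exp 1 * u then ennreal (t powr (b-1) * (1 - ln t) powr p) else 0) \<partial>lborel)
     \<le> ennreal ((1 + 2*p/b) powr p * exp b * 2 / b * (u powr b * (1 - ln u) powr p))"
proof -
  define v where "v = exp 1 * u"
  define M where "M = (1 + 2*p/b) powr p * (1 - ln u) powr p * v powr (b/2)"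
  have v0: "v > 0" using assms by (simp add: v_def)
  have "(\<integral>\<^sup>+t. (if 0 < t \<and> t < 1 \<and> t < exp 1 * u then ennreal (t powr (b-1) * (1 - ln t) powr p) else 0) \<partial>lborel)
     \<le> (\<integral>\<^sup>+t. ennreal (M * t powr (b/2 - 1)) * indicator {0..v} t \<partial>lborel)"
  proof (rule nn_integral_mono)
    fix t :: real
    show "(if 0 < t \<and> t < 1 \<and> t < exp 1 * u then ennreal (t powr (b-1) * (1 - ln t) powr p) else 0)
       \<le> ennreal (M * t powr (b/2 - 1)) * indicator {0..v} t"
    proof (cases "0 < t \<and> t < 1 \<and> t < exp 1 * u")
      case True
      then have t: "0 < t" "t < v" by (auto simp: v_def)
      have "t powr (b-1) * (1 - ln t) powr p
          \<le> t powr (b-1) * ((1 + 2*p/b) powr p * (1 - ln u) powr p * (v / t) powr (b/2))"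
        using one_minus_ln_powr_le[OF assms, of t] True by (intro mult_left_mono) (auto simp: v_def)
      also have "\<dots> = M * (t powr (b-1) / t powr (b/2))"
        using t v0 by (simp add: M_def powr_divide)
      also have "t powr (b-1) / t powr (b/2) = t powr (b/2 - 1)"
        using t by (simp add: powr_diff[symmetric])
      finally show ?thesis using True t by (auto intro: ennreal_leI)
    next
      case False
      then show ?thesis by (simp only: if_False) simp
    qed
  qed
  also have "\<dots> = ennreal (M * (v powr (b/2) / (b/2)))"
  proof -
    have I: "((\<lambda>t. M * t powr (b/2 - 1)) has_integral M * (v powr (b/2) / (b/2))) {0..v}"
      using has_integral_powr_from_0[of "b/2 - 1" v] assms v0 by (intro has_integral_mult_right) auto
    show ?thesis by (rule nn_integral_has_integral_lebesgue'[OF _ I]) (simp add: M_def)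
  qed
  also have "M * (v powr (b/2) / (b/2)) = (1 + 2*p/b) powr p * exp b * 2 / b * (u powr b * (1 - ln u) powr p)"
  proof -
    have "v powr (b/2) * v powr (b/2) = v powr b" by (simp add: powr_add[symmetric])
    also have "\<dots> = exp 1 powr b * u powr b" using assms by (simp add: v_def powr_mult)
    also have "exp 1 powr b = exp b" by (simp add: powr_def)
    finally show ?thesis by (simp add: M_def field_simps)
  qed
  finally show ?thesis .
qed

definition tail_sup :: "real \<Rightarrow> (real \<Rightarrow> real) \<Rightarrow> real \<Rightarrow> real" where
  "tail_sup a K t = (SUP s\<in>{t<..<1}. (1 - ln s) powr (-a) * K s)"

lemma weighted_kernel_le_tail_sup:
  fixes a t s :: real and K :: "real \<Rightarrow> real"
  assumes "a \<ge> 0" "0 < t" "s \<in> {t<..<1}"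
    and "\<forall>t\<in>{0<..<1}. 0 \<le> K t" "antimono_on {0<..<1} K"
  shows "(1 - ln s) powr (-a) * K s \<le> tail_sup a K t"
  unfolding tail_sup_def
proof (rule cSUP_upper[OF assms(3)], rule bdd_aboveI2)
  fix s assume s: "s \<in> {t<..<1}"
  have "1 \<le> 1 - ln s" using s assms(2) by simp
  then have "(1 - ln s) powr (-a) \<le> 1"
    using ge_one_powr_ge_zero[of "1 - ln s" a] assms(1) by (simp add: powr_minus_divide)
  moreover have "0 \<le> K s" "K s \<le> K t"
    using assms s monotone_onD[OF assms(5), of t s] by auto
  ultimately have "(1 - ln s) powr (-a) * K s \<le> 1 * K t"
    by (intro mult_mono) auto
  then show "(1 - ln s) powr (-a) * K s \<le> K t" by simp
qed

lemma tail_sup_nonneg: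
  fixes a t :: real and K :: "real \<Rightarrow> real"
  assumes "a \<ge> 0" "0 < t" "t < 1"
    and "\<forall>t\<in>{0<..<1}. 0 \<le> K t" "antimono_on {0<..<1} K"
  shows "0 \<le> tail_sup a K t"
proof -
  have s: "(t + 1) / 2 \<in> {t<..<1}" using assms by auto
  then have "0 \<le> (1 - ln ((t + 1) / 2)) powr (-a) * K ((t + 1) / 2)" using assms by auto
  also have "\<dots> \<le> tail_sup a K t" by (rule weighted_kernel_le_tail_sup[OF assms(1,2) s assms(4,5)])
  finally show ?thesis .
qed

lemma weighted_kernel_le_two_powr:
  fixes a s u :: real and K :: "real \<Rightarrow> real"
  assumes "a \<ge> 0" "0 < s" "s < 1" "s / exp 1 < u" "u \<le> s"
    and "\<forall>t\<in>{0<..<1}. 0 \<le> K t" "antimono_on {0<..<1} K"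
  shows "(1 - ln s) powr (-a) * K s \<le> 2 powr a * ((1 - ln u) powr (-a) * K u)"
proof -
  have "0 < s / exp 1" using assms(2) by simp
  then have u0: "0 < u" using assms(4) by linarith
  have ws: "1 - ln s \<ge> 1" using assms(2,3) by simp
  have wu: "1 - ln u \<ge> 1" using u0 assms(3,5) by simp
  have "ln s - 1 < ln u" using ln_less_cancel_iff[of "s / exp 1" u] assms(2,4) u0 by (simp add: ln_div)
  hence "1 - ln u \<le> 2 * (1 - ln s)" using ws by (simp add: algebra_simps)
  hence "(1 - ln u) powr a \<le> (2 * (1 - ln s)) powr a" using wu assms by (intro powr_mono2) auto
  also have "\<dots> = 2 powr a * (1 - ln s) powr a" using ws by (subst powr_mult) auto
  finally have "(1 - ln s) powr (-a) \<le> 2 powr a * (1 - ln u) powr (-a)"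
    using ws wu by (simp add: powr_minus_divide field_simps)
  moreover have "0 \<le> K s" "K s \<le> K u"
    using assms u0 monotone_onD[OF assms(7), of u s] by auto
  ultimately have "(1 - ln s) powr (-a) * K s \<le> (2 powr a * (1 - ln u) powr (-a)) * K u"
    by (intro mult_mono) auto
  then show ?thesis by (simp only: mult.assoc)
qed

lemma weighted_kernel_powr_le_integral:
  fixes a r t s :: real and K :: "real \<Rightarrow> real"
  assumes "a \<ge> 0" "r > 0" "0 < t" "s \<in> {t<..<1}"
    and K_nonneg: "\<forall>t\<in>{0<..<1}. 0 \<le> K t" and K_anti: "antimono_on {0<..<1} K"
  shows "ennreal (((1 - ln s) powr (-a) * K s) powr r)
     \<le> ennreal (2 powr (a*r) * exp 1 / (exp 1 - 1))
        * (\<integral>\<^sup>+u. (if t < exp 1 * u \<and> u < 1 then ennreal (((1 - ln u) powr (-a) * K u) powr r / u) else 0) \<partial>lborel)"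
proof -
  define g where "g x = (1 - ln x) powr (-a) * K x" for x
  define C where "C = 2 powr (a*r) * exp 1 / (exp 1 - 1)"
  define \<Phi> where "\<Phi> = (\<integral>\<^sup>+u. (if t < exp 1 * u \<and> u < 1 then ennreal (g u powr r / u) else 0) \<partial>lborel)"
  have C0: "C > 0" by (simp add: C_def)
  have s0: "0 < s" "s < 1" using assms by auto
  have "s * 1 < s * exp 1" using s0 by (intro mult_strict_left_mono) auto
  then have s_e: "s / exp 1 < s" by (simp add: divide_less_eq)
  have "(\<integral>\<^sup>+u. ennreal (2 powr (-(a*r)) * g s powr r / s) * indicator {s/exp 1<..<s} u \<partial>lborel) \<le> \<Phi>"
    unfolding \<Phi>_def
  proof (rule nn_integral_mono)
    fix u :: real
    show "ennreal (2 powr (-(a*r)) * g s powr r / s) * indicator {s/exp 1<..<s} u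
      \<le> (if t < exp 1 * u \<and> u < 1 then ennreal (g u powr r / u) else 0)"
    proof (cases "u \<in> {s/exp 1<..<s}")
      case True
      then have u: "0 < u" "u < s" "t < exp 1 * u"
        using assms(4) s0 by (auto simp: divide_less_eq mult.commute intro: less_trans[of 0 "s / exp 1"])
      have "0 \<le> g s" using K_nonneg s0 by (simp add: g_def)
      moreover have "g s \<le> 2 powr a * g u"
        unfolding g_def using weighted_kernel_le_two_powr[OF assms(1) s0 _ _ K_nonneg K_anti] True by auto
      ultimately have "g s powr r \<le> (2 powr a * g u) powr r" using assms(2) by (intro powr_mono2) auto
      also have "\<dots> = 2 powr (a*r) * g u powr r"
        using K_nonneg u s0 by (simp add: g_def powr_mult powr_powr)
      finally have "2 powr (-(a*r)) * g s powr r \<le> g u powr r"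
        by (simp add: powr_minus field_simps)
      then have "2 powr (-(a*r)) * g s powr r / s \<le> g u powr r / u"
        using u by (intro frac_le) auto
      then show ?thesis using True u s0 by (auto intro: ennreal_leI)
    qed simp
  qed
  moreover have "(\<integral>\<^sup>+u. ennreal (2 powr (-(a*r)) * g s powr r / s) * indicator {s/exp 1<..<s} u \<partial>lborel)
     = ennreal (g s powr r / C)"
  proof -
    have "2 powr (-(a*r)) * g s powr r / s * (s - s / exp 1) = g s powr r / C"
      using s0 unfolding C_def by (simp add: field_simps powr_minus)
    then show ?thesis
      using s0 s_e C0 by (simp add: nn_integral_cmult_indicator ennreal_mult[symmetric])
  qed
  ultimately have "ennreal C * ennreal (g s powr r / C) \<le> ennreal C * \<Phi>"
    by (intro mult_left_mono) auto
  moreover have "ennreal C * ennreal (g s powr r / C) = ennreal (g s powr r)"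
    using C0 by (simp add: ennreal_mult[symmetric])
  ultimately have "ennreal (g s powr r) \<le> ennreal C * \<Phi>" by simp
  then show ?thesis unfolding g_def C_def \<Phi>_def .
qed

lemma tail_sup_powr_le_integral:
  fixes a r t :: real and K :: "real \<Rightarrow> real"
  assumes "a \<ge> 0" "r > 0" "0 < t" "t < 1"
    and "\<forall>t\<in>{0<..<1}. 0 \<le> K t" "antimono_on {0<..<1} K"
  shows "ennreal (tail_sup a K t powr r)
     \<le> ennreal (2 powr (a*r) * exp 1 / (exp 1 - 1))
        * (\<integral>\<^sup>+u. (if t < exp 1 * u \<and> u < 1 then ennreal (((1 - ln u) powr (-a) * K u) powr r / u) else 0) \<partial>lborel)"
  unfolding tail_sup_def using assms
  by (intro powr_SUP_le weighted_kernel_powr_le_integral) auto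

definition tail_sup_integral :: "real \<Rightarrow> real \<Rightarrow> real \<Rightarrow> (real \<Rightarrow> real) \<Rightarrow> ennreal" where
  "tail_sup_integral \<theta> a r K = (\<integral>\<^sup>+ t\<in>{0<..<1}.
     ennreal ((t powr (1 - \<theta>) * (1 - ln t) powr (a * (1 - \<theta>)) * tail_sup a K t) powr r / t) \<partial>lborel)"

definition kernel_integral :: "real \<Rightarrow> real \<Rightarrow> real \<Rightarrow> (real \<Rightarrow> real) \<Rightarrow> ennreal" where
  "kernel_integral \<theta> a r K = (\<integral>\<^sup>+ t\<in>{0<..<1}.
     ennreal ((t powr (1 - \<theta>) * (1 - ln t) powr (- a * \<theta>) * K t) powr r / t) \<partial>lborel)"

lemma kernel_weight_le_tail_sup_weight:
  fixes a \<theta> x :: real and K :: "real \<Rightarrow> real"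
  assumes "a \<ge> 0" "\<theta> \<le> 1" "0 < x" "2 * x < 1"
    and K_nonneg: "\<forall>t\<in>{0<..<1}. 0 \<le> K t" and K_anti: "antimono_on {0<..<1} K"
  shows "(2 * x) powr (1 - \<theta>) * (1 - ln (2 * x)) powr (- a * \<theta>) * K (2 * x)
    \<le> 2 powr (1 - \<theta>) * (x powr (1 - \<theta>) * (1 - ln x) powr (a * (1 - \<theta>)) * tail_sup a K x)"
proof -
  define s where "s = 2 * x"
  have s: "s \<in> {x<..<1}" using assms by (simp add: s_def)
  have ws: "1 \<le> 1 - ln s" and wx: "1 - ln s \<le> 1 - ln x" using assms s by auto
  have "(1 - ln s) powr (- a * \<theta>) = (1 - ln s) powr (a * (1 - \<theta>)) * (1 - ln s) powr (-a)"
    by (simp add: powr_add[symmetric] algebra_simps)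
  then have "s powr (1 - \<theta>) * (1 - ln s) powr (- a * \<theta>) * K s
      = 2 powr (1 - \<theta>) * (x powr (1 - \<theta>) * (1 - ln s) powr (a * (1 - \<theta>)) * ((1 - ln s) powr (-a) * K s))"
    using assms by (simp add: s_def powr_mult mult_ac)
  also have "\<dots> \<le> 2 powr (1 - \<theta>) * (x powr (1 - \<theta>) * (1 - ln x) powr (a * (1 - \<theta>)) * tail_sup a K x)"
  proof -
    have "(1 - ln s) powr (a * (1 - \<theta>)) \<le> (1 - ln x) powr (a * (1 - \<theta>))"
      using assms ws wx by (intro powr_mono2) auto
    moreover have "0 \<le> K s" using K_nonneg s assms by auto
    ultimately show ?thesis
      using weighted_kernel_le_tail_sup[OF assms(1,3) s K_nonneg K_anti]
      by (intro mult_left_mono mult_mono) auto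
  qed
  finally show ?thesis by (simp add: s_def)
qed

lemma kernel_integral_le_tail_sup_integral:
  fixes a \<theta> r :: real and K :: "real \<Rightarrow> real"
  assumes "a \<ge> 0" "\<theta> \<le> 1" "r > 0"
    and [measurable]: "K \<in> borel_measurable borel"
    and K_nonneg: "\<forall>t\<in>{0<..<1}. 0 \<le> K t" and K_anti: "antimono_on {0<..<1} K"
  shows "kernel_integral \<theta> a r K \<le> ennreal (2 powr ((1 - \<theta>) * r)) * tail_sup_integral \<theta> a r K"
proof -
  define c where "c = 2 powr ((1 - \<theta>) * r)"
  define fA where "fA t = (t powr (1 - \<theta>) * (1 - ln t) powr (a * (1 - \<theta>)) * tail_sup a K t) powr r / t" for t
  define fB where "fB t = (t powr (1 - \<theta>) * (1 - ln t) powr (- a * \<theta>) * K t) powr r / t" for t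
  define I where "I = (\<integral>\<^sup>+x. ennreal (fB (2 * x)) * indicator {0<..<1} (2 * x) \<partial>lborel)"
  have c0: "c > 0" by (simp add: c_def)
  have "kernel_integral \<theta> a r K = (\<integral>\<^sup>+t. ennreal (fB t) * indicator {0<..<1} t \<partial>lborel)"
    unfolding kernel_integral_def fB_def ..
  also have "\<dots> = ennreal c * (ennreal (2 / c) * I)"
    using nn_integral_real_affine[of "\<lambda>t. ennreal (fB t) * indicator {0<..<1} t" 2 0] c0
    unfolding fB_def I_def by (simp add: ennreal_mult[symmetric] mult.assoc[symmetric])
  also have "ennreal (2 / c) * I = (\<integral>\<^sup>+x. ennreal (2 / c) * (ennreal (fB (2 * x)) * indicator {0<..<1} (2 * x)) \<partial>lborel)"
    unfolding I_def fB_def by (rule nn_integral_cmult[symmetric]) measurable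
  also have "\<dots> \<le> tail_sup_integral \<theta> a r K"
    unfolding tail_sup_integral_def fA_def[symmetric]
  proof (rule nn_integral_mono)
    fix x :: real
    show "ennreal (2 / c) * (ennreal (fB (2 * x)) * indicator {0<..<1} (2 * x))
      \<le> ennreal (fA x) * indicator {0<..<1} x"
    proof (cases "0 < x \<and> 2 * x < 1")
      case True
      have "fB (2 * x) \<le> (2 powr (1 - \<theta>) * (x powr (1 - \<theta>) * (1 - ln x) powr (a * (1 - \<theta>)) * tail_sup a K x)) powr r / (2 * x)"
        unfolding fB_def using True assms K_nonneg
        by (intro divide_right_mono powr_mono2 kernel_weight_le_tail_sup_weight) auto
      also have "\<dots> = c / 2 * fA x"
        using True tail_sup_nonneg[OF assms(1), of x K] K_nonneg K_anti
        by (simp add: c_def fA_def powr_mult powr_powr)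
      finally have "2 / c * fB (2 * x) \<le> fA x" using c0 by (simp add: field_simps)
      moreover have "0 \<le> fB (2 * x)" using True by (simp add: fB_def)
      ultimately show ?thesis using True c0 by (simp add: ennreal_mult[symmetric] ennreal_leI)
    qed auto
  qed
  finally show ?thesis by (simp add: c_def mult_left_mono)
qed

lemma tail_sup_integrand_le:
  fixes a \<theta> r t :: real and K :: "real \<Rightarrow> real"
  assumes "a \<ge> 0" "r > 0" "0 < t" "t < 1"
    and [measurable]: "K \<in> borel_measurable borel"
    and K_nonneg: "\<forall>t\<in>{0<..<1}. 0 \<le> K t" and K_anti: "antimono_on {0<..<1} K"
  shows "ennreal ((t powr (1 - \<theta>) * (1 - ln t) powr (a * (1 - \<theta>)) * tail_sup a K t) powr r / t)
    \<le> ennreal (2 powr (a * r) * exp 1 / (exp 1 - 1))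
      * (\<integral>\<^sup>+u. (if t < exp 1 * u \<and> u < 1 then ennreal (t powr ((1 - \<theta>) * r - 1)
          * (1 - ln t) powr (a * (1 - \<theta>) * r) * (((1 - ln u) powr (-a) * K u) powr r / u)) else 0) \<partial>lborel)"
proof -
  define S where "S = tail_sup a K t"
  define h where "h = t powr ((1 - \<theta>) * r - 1) * (1 - ln t) powr (a * (1 - \<theta>) * r)"
  define \<phi> where "\<phi> u = ((1 - ln u) powr (-a) * K u) powr r / u" for u
  have [measurable]: "\<phi> \<in> borel_measurable borel" unfolding \<phi>_def by measurable
  have S0: "0 \<le> S" unfolding S_def using assms by (intro tail_sup_nonneg) auto
  have "ln t < 0" using assms by simp
  then have w0: "0 < 1 - ln t" by linarith
  have h0: "0 \<le> h" by (simp add: h_def)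
  have "(t powr (1 - \<theta>) * (1 - ln t) powr (a * (1 - \<theta>)) * S) powr r
      = t powr ((1 - \<theta>) * r) * (1 - ln t) powr (a * (1 - \<theta>) * r) * S powr r"
    using assms w0 S0 by (simp add: powr_mult powr_powr mult.assoc)
  moreover have "t powr ((1 - \<theta>) * r - 1) = t powr ((1 - \<theta>) * r) / t" using assms by (simp add: powr_diff)
  ultimately have "ennreal ((t powr (1 - \<theta>) * (1 - ln t) powr (a * (1 - \<theta>)) * S) powr r / t)
      = ennreal h * ennreal (S powr r)"
    using h0 by (simp add: h_def ennreal_mult[symmetric])
  also have "\<dots> \<le> ennreal h * (ennreal (2 powr (a * r) * exp 1 / (exp 1 - 1))
      * (\<integral>\<^sup>+u. (if t < exp 1 * u \<and> u < 1 then ennreal (\<phi> u) else 0) \<partial>lborel))"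
    unfolding S_def \<phi>_def using assms K_nonneg K_anti
    by (intro mult_left_mono tail_sup_powr_le_integral) auto
  also have "\<dots> = ennreal (2 powr (a * r) * exp 1 / (exp 1 - 1))
      * (\<integral>\<^sup>+u. ennreal h * (if t < exp 1 * u \<and> u < 1 then ennreal (\<phi> u) else 0) \<partial>lborel)"
    by (subst nn_integral_cmult) (measurable, simp add: mult_ac)
  also have "(\<integral>\<^sup>+u. ennreal h * (if t < exp 1 * u \<and> u < 1 then ennreal (\<phi> u) else 0) \<partial>lborel)
      = (\<integral>\<^sup>+u. (if t < exp 1 * u \<and> u < 1 then ennreal (h * \<phi> u) else 0) \<partial>lborel)"
    using h0 by (intro nn_integral_cong) (simp add: ennreal_mult'[symmetric])
  finally show ?thesis unfolding S_def h_def \<phi>_def .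
qed

lemma inner_integral_le_kernel_integrand:
  fixes a \<theta> r u k :: real
  assumes "a > 0" "\<theta> < 1" "r > 0" "0 < u" "u < 1" "0 \<le> k"
  shows "(\<integral>\<^sup>+t. (if 0 < t \<and> t < 1 \<and> t < exp 1 * u then ennreal (t powr ((1 - \<theta>) * r - 1)
          * (1 - ln t) powr (a * (1 - \<theta>) * r) * (((1 - ln u) powr (-a) * k) powr r / u)) else 0) \<partial>lborel)
    \<le> ennreal ((1 + 2 * a) powr (a * (1 - \<theta>) * r) * exp ((1 - \<theta>) * r) * 2 / ((1 - \<theta>) * r))
      * ennreal ((u powr (1 - \<theta>) * (1 - ln u) powr (- a * \<theta>) * k) powr r / u)"
proof -
  define b where "b = (1 - \<theta>) * r"
  define p where "p = a * (1 - \<theta>) * r"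
  define \<phi> where "\<phi> = ((1 - ln u) powr (-a) * k) powr r / u"
  have b0: "b > 0" and p0: "p > 0" using assms by (auto simp: b_def p_def)
  have \<phi>0: "0 \<le> \<phi>" using assms by (simp add: \<phi>_def)
  have "ln u < 0" using assms by simp
  then have w0: "0 < 1 - ln u" by linarith
  have "(\<integral>\<^sup>+t. (if 0 < t \<and> t < 1 \<and> t < exp 1 * u then ennreal (t powr (b - 1) * (1 - ln t) powr p * \<phi>) else 0) \<partial>lborel)
      = (\<integral>\<^sup>+t. (if 0 < t \<and> t < 1 \<and> t < exp 1 * u then ennreal (t powr (b - 1) * (1 - ln t) powr p) else 0) \<partial>lborel)
        * ennreal \<phi>"
    using \<phi>0 by (subst nn_integral_multc[symmetric]) (measurable, auto simp: ennreal_mult intro!: nn_integral_cong)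
  also have "\<dots> \<le> ennreal ((1 + 2 * p / b) powr p * exp b * 2 / b * (u powr b * (1 - ln u) powr p)) * ennreal \<phi>"
    using assms by (intro mult_right_mono nn_integral_powr_ln_weight_le b0 p0) auto
  also have "\<dots> = ennreal ((1 + 2 * p / b) powr p * exp b * 2 / b) * ennreal (u powr b * (1 - ln u) powr p * \<phi>)"
    using b0 \<phi>0 by (simp add: ennreal_mult[symmetric] mult.assoc)
  also have "2 * p / b = 2 * a" using assms by (simp add: b_def p_def)
  also have "u powr b * (1 - ln u) powr p * \<phi> = (u powr (1 - \<theta>) * (1 - ln u) powr (- a * \<theta>) * k) powr r / u"
  proof -
    have "(1 - ln u) powr p * (1 - ln u) powr (- a * r) = (1 - ln u) powr (- a * \<theta> * r)"
      by (simp add: powr_add[symmetric] p_def algebra_simps)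
    then show ?thesis using assms w0 by (simp add: \<phi>_def b_def powr_mult powr_powr mult_ac)
  qed
  finally show ?thesis unfolding b_def p_def \<phi>_def .
qed

lemma tail_sup_integral_le_kernel_integral:
  fixes a \<theta> r :: real and K :: "real \<Rightarrow> real"
  assumes "a > 0" "\<theta> < 1" "r > 0"
    and [measurable]: "K \<in> borel_measurable borel"
    and K_nonneg: "\<forall>t\<in>{0<..<1}. 0 \<le> K t" and K_anti: "antimono_on {0<..<1} K"
  shows "tail_sup_integral \<theta> a r K
    \<le> ennreal (2 powr (a * r) * exp 1 / (exp 1 - 1)
        * ((1 + 2 * a) powr (a * (1 - \<theta>) * r) * exp ((1 - \<theta>) * r) * 2 / ((1 - \<theta>) * r)))
      * kernel_integral \<theta> a r K"
proof -
  define C1 where "C1 = 2 powr (a * r) * exp 1 / (exp 1 - 1)"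
  define C2 where "C2 = (1 + 2 * a) powr (a * (1 - \<theta>) * r) * exp ((1 - \<theta>) * r) * 2 / ((1 - \<theta>) * r)"
  define F where "F t u = (if 0 < t \<and> t < 1 \<and> t < exp 1 * u \<and> u < 1 then ennreal (t powr ((1 - \<theta>) * r - 1)
    * (1 - ln t) powr (a * (1 - \<theta>) * r) * (((1 - ln u) powr (-a) * K u) powr r / u)) else 0)" for t u
  have [measurable]: "case_prod F \<in> borel_measurable (lborel \<Otimes>\<^sub>M lborel)"
    unfolding F_def by measurable
  have C1_0: "C1 \<ge> 0" and C2_0: "C2 \<ge> 0" using assms by (auto simp: C1_def C2_def)
  have "tail_sup_integral \<theta> a r K \<le> (\<integral>\<^sup>+t. ennreal C1 * (\<integral>\<^sup>+u. F t u \<partial>lborel) \<partial>lborel)"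
    unfolding tail_sup_integral_def
  proof (rule nn_integral_mono)
    fix t :: real
    show "ennreal ((t powr (1 - \<theta>) * (1 - ln t) powr (a * (1 - \<theta>)) * tail_sup a K t) powr r / t)
      * indicator {0<..<1} t \<le> ennreal C1 * (\<integral>\<^sup>+u. F t u \<partial>lborel)"
      using tail_sup_integrand_le[of a r t K \<theta>] assms K_nonneg K_anti
      by (cases "t \<in> {0<..<1}") (auto simp: C1_def F_def cong: if_cong)
  qed
  also have "\<dots> = ennreal C1 * (\<integral>\<^sup>+u. (\<integral>\<^sup>+t. F t u \<partial>lborel) \<partial>lborel)"
    by (subst lborel_pair.Fubini') (measurable, rule nn_integral_cmult, measurable)
  also have "(\<integral>\<^sup>+u. (\<integral>\<^sup>+t. F t u \<partial>lborel) \<partial>lborel) \<le> ennreal C2 * kernel_integral \<theta> a r K"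
    unfolding kernel_integral_def
  proof (subst nn_integral_cmult[symmetric], measurable, rule nn_integral_mono)
    fix u :: real
    show "(\<integral>\<^sup>+t. F t u \<partial>lborel) \<le> ennreal C2 * (ennreal ((u powr (1 - \<theta>) * (1 - ln u)
      powr (- a * \<theta>) * K u) powr r / u) * indicator {0<..<1} u)"
    proof (cases "u \<in> {0<..<1}")
      case True
      then show ?thesis
        using inner_integral_le_kernel_integrand[OF assms(1-3), of u "K u"] K_nonneg
        by (auto simp: F_def C2_def cong: if_cong)
    next
      case False
      have "F t u = 0" for t
        using False by (auto simp: F_def zero_less_mult_iff dest: order.strict_trans)
      then show ?thesis by simp
    qed
  qed
  also have "ennreal C1 * (ennreal C2 * kernel_integral \<theta> a r K) = ennreal (C1 * C2) * kernel_integral \<theta> a r K"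
    using C1_0 C2_0 by (simp add: ennreal_mult mult.assoc)
  finally show ?thesis unfolding C1_def C2_def by (simp add: mult_left_mono)
qed

lemma antimono_on_restriction_measurable:
  fixes K :: "real \<Rightarrow> real"
  assumes "antimono_on {0<..<1} K"
  shows "(\<lambda>u. if u \<in> {0<..<1} then K u else 0) \<in> borel_measurable borel"
proof -
  have "mono_on {0<..<1} (\<lambda>u. - K u)"
    by (intro monotone_onI) (use monotone_onD[OF assms] in force)
  then have "(\<lambda>u. - K u) \<in> borel_measurable (restrict_space borel {0<..<1})"
    by (rule borel_measurable_mono_on_fnc)
  then have "(\<lambda>u. - (- K u)) \<in> borel_measurable (restrict_space borel {0<..<1})"
    by measurable
  then have "K \<in> borel_measurable (restrict_space borel {0<..<1})" by simp
  then show ?thesis by (subst (asm) measurable_restrict_space_iff) auto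
qed

lemma tail_sup_integral_restriction:
  "tail_sup_integral \<theta> a r (\<lambda>u. if u \<in> {0<..<1} then K u else 0) = tail_sup_integral \<theta> a r K"
  unfolding tail_sup_integral_def tail_sup_def
  by (intro nn_integral_cong) (auto simp: indicator_def intro!: SUP_cong)

lemma kernel_integral_restriction:
  "kernel_integral \<theta> a r (\<lambda>u. if u \<in> {0<..<1} then K u else 0) = kernel_integral \<theta> a r K"
  unfolding kernel_integral_def by (intro nn_integral_cong) (auto simp: indicator_def)

lemma antimono_on_unit_interval_iff:
  fixes K :: "real \<Rightarrow> real"
  shows "antimono_on {0<..<1} K \<longleftrightarrow> (\<forall>s t. 0 < s \<longrightarrow> s \<le> t \<longrightarrow> t < 1 \<longrightarrow> K t \<le> K s)"
  by (auto simp: monotone_on_def)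

lemma tail_sup_integral_comparable_kernel_integral:
  fixes a \<theta> r :: real
  assumes "a > 0" "\<theta> < 1" "r > 0"
  shows "\<exists>c>0. \<forall>K. (\<forall>t\<in>{0<..<1}. 0 \<le> K t) \<and> antimono_on {0<..<1} K \<longrightarrow>
    tail_sup_integral \<theta> a r K \<le> ennreal c * kernel_integral \<theta> a r K \<and>
    kernel_integral \<theta> a r K \<le> ennreal c * tail_sup_integral \<theta> a r K"
proof -
  define C where "C = 2 powr (a * r) * exp 1 / (exp 1 - 1)
    * ((1 + 2 * a) powr (a * (1 - \<theta>) * r) * exp ((1 - \<theta>) * r) * 2 / ((1 - \<theta>) * r))"
  define c where "c = max C (2 powr ((1 - \<theta>) * r))"
  have "C \<le> c" "2 powr ((1 - \<theta>) * r) \<le> c" "c > 0" by (auto simp: c_def less_max_iff_disj)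
  then have C_le: "ennreal C \<le> ennreal c" and two_le: "ennreal (2 powr ((1 - \<theta>) * r)) \<le> ennreal c"
    by (auto intro: ennreal_leI)
  show ?thesis
  proof (intro exI[of _ c] conjI allI impI \<open>c > 0\<close>; elim conjE)
    fix K :: "real \<Rightarrow> real"
    assume K_nonneg: "\<forall>t\<in>{0<..<1}. 0 \<le> K t" and K_anti: "antimono_on {0<..<1} K"
    define K' where "K' = (\<lambda>u. if u \<in> {0<..<1} then K u else 0)"
    have K': "K' \<in> borel_measurable borel" "\<forall>t\<in>{0<..<1}. 0 \<le> K' t" "antimono_on {0<..<1} K'"
      using antimono_on_restriction_measurable[OF K_anti] K_nonneg K_anti
      by (auto simp: K'_def monotone_on_def)
    have sup_eq: "tail_sup_integral \<theta> a r K' = tail_sup_integral \<theta> a r K"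
      and kernel_eq: "kernel_integral \<theta> a r K' = kernel_integral \<theta> a r K"
      unfolding K'_def by (rule tail_sup_integral_restriction kernel_integral_restriction)+
    have "tail_sup_integral \<theta> a r K \<le> ennreal C * kernel_integral \<theta> a r K"
      unfolding C_def sup_eq[symmetric] kernel_eq[symmetric]
      by (rule tail_sup_integral_le_kernel_integral[OF assms K'])
    then show "tail_sup_integral \<theta> a r K \<le> ennreal c * kernel_integral \<theta> a r K"
      using C_le by (rule order_trans[OF _ mult_right_mono]) simp
    have "kernel_integral \<theta> a r K \<le> ennreal (2 powr ((1 - \<theta>) * r)) * tail_sup_integral \<theta> a r K"
      unfolding sup_eq[symmetric] kernel_eq[symmetric]
      by (rule kernel_integral_le_tail_sup_integral[OF _ _ _ K']) (use assms in auto)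
    then show "kernel_integral \<theta> a r K \<le> ennreal c * tail_sup_integral \<theta> a r K"
      using two_le by (rule order_trans[OF _ mult_right_mono]) simp
  qed
qed

theorem proposition3p1:
  fixes q \<alpha> \<theta> r :: real
  assumes "q > 1" and "\<alpha> > 0" and "0 < \<theta>" and "\<theta> < 1" and "1 \<le> r"
  shows "\<exists>c::real. c > 0 \<and>
    (\<forall>K :: real \<Rightarrow> real.
       (\<forall>t\<in>{0<..<1}. 0 \<le> K t) \<and>
       (\<forall>s t. 0 < s \<longrightarrow> s \<le> t \<longrightarrow> t < 1 \<longrightarrow> K t \<le> K s) \<longrightarrow>
       (let A = (\<integral>\<^sup>+ t\<in>{0<..<1}.
                   ennreal ((t powr (1 - \<theta>) * (1 - ln t) powr (\<alpha> * (1 - \<theta>) / q)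
                      * (SUP s\<in>{t<..<1}. (1 - ln s) powr (- \<alpha> / q) * K s)) powr r / t) \<partial>lborel);
            B = (\<integral>\<^sup>+ t\<in>{0<..<1}.
                   ennreal ((t powr (1 - \<theta>) * (1 - ln t) powr (- \<alpha> * \<theta> / q) * K t) powr r / t) \<partial>lborel)
        in A \<le> ennreal c * B \<and> B \<le> ennreal c * A))"
proof -
  have "\<alpha> / q > 0" "r > 0" using assms by auto
  from tail_sup_integral_comparable_kernel_integral[OF this(1) assms(4) this(2)] show ?thesis
    by (simp add: Let_def tail_sup_integral_def kernel_integral_def tail_sup_def
        antimono_on_unit_interval_iff)
qed

end
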